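(* Let $f,g$ be polynomials in $L,M$ and $\hat f,\hat g$ polynomials in $\hat L,\hat M$. Then $$\{f\hat f,g\hat g\}=[f,g]\hat f\hat g-fg[\hat f,\hat g],\qquad \{\hat f f,\hat g g\}=\hat f\hat g[f,g]-[\hat f,\hat g]fg,$$ $$\{f\hat f,\hat g g\}=[f,\hat g][g,\hat f]-f[\hat f,\hat g]g+\hat g[f,g]\hat f.$$
   Context: Setting: the two-component BKP hierarchy. $D=d/dx$; pseudo-differential operators multiply via $D^i f=\sum_{r\ge0}\binom{i}{r}D^r(f)D^{i-r}$; $A_+$ and $A_-$ denote the parts of $A=\sum f_iD^i$ with $i\ge0$ and $i<0$. Dressing operators $\Phi=1+\sum_{i\ge1}a_iD^{-i}$, $\hat\Phi=1+\sum_{i\ge1}b_iD^i$ (with $\Phi^*=D\Phi^{-1}D^{-1}$, $\hat\Phi^*=D\hat\Phi^{-1}D^{-1}$, where $(\sum f_iD^i)^*=\sum(-D)^if_i$); Lax operators $L=\Phi D\Phi^{-1}$, $\hat L=\hat\Phi D^{-1}\hat\Phi^{-1}$; Orlov–Schulman operators $M=\Phi\Gamma\Phi^{-1}$, $\hat M=\hat\Phi\hat\Gamma\hat\Phi^{-1}$ with $\Gamma=\sum_{k\ \mathrm{odd}}kt_kD^{k-1}$, $\hat\Gamma=x+\sum_{k\ \mathrm{odd}}k\hat t_kD^{-k-1}$ ($t_1=x$). For an operator $A=A(L,\hat L^{-1},M,\hat M)$, $Y_A$ denotes the derivation defined by $Y_A\Phi=-A_-\Phi$, $Y_A\hat\Phi=A_+\hat\Phi$,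 so that $Y_AL=[-A_-,L]$, $Y_AM=[-A_-,M]$, $Y_A\hat L=[A_+,\hat L]$, $Y_A\hat M=[A_+,\hat M]$, extended to products of $L,\hat L,M,\hat M$ by the Leibniz rule. The bracket is $\{A,B\}=-Y_AB+Y_BA-[A_-,B_-]+[A_+,B_+]$. *)

theory Defs
  imports Main
begin

text \<open>Abstract rendering of the algebraic setting of the two-component BKP
hierarchy.  Operators live in an associative ring 'a (the algebra of
pseudo-differential operators); the splitting A = A_+ + A_- is given by a
map pp (the "plus part"), with A_- = A - A_+.  The operators L, hat L, M, hat M
are arbitrary elements of the ring.  Expressions in L, hat L, M, hat M are formal
non-commutative polynomials (lists of (constant coefficient, word) pairs);
constants are central elements of 'a.\<close>

datatype gen = GL | GLh | GM | GMh

type_synonym 'a ncpoly = "('a \<times> gen list) list"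

definition minus_part :: "('a::ring_1 \<Rightarrow> 'a) \<Rightarrow> 'a \<Rightarrow> 'a" where
  "minus_part pp A = A - pp A"

definition comm :: "'a::ring_1 \<Rightarrow> 'a \<Rightarrow> 'a" where
  "comm A B = A * B - B * A"

fun eval_gen :: "'a \<Rightarrow> 'a \<Rightarrow> 'a \<Rightarrow> 'a \<Rightarrow> gen \<Rightarrow> 'a" where
  "eval_gen L Lh M Mh GL = L"
| "eval_gen L Lh M Mh GLh = Lh"
| "eval_gen L Lh M Mh GM = M"
| "eval_gen L Lh M Mh GMh = Mh"

definition eval_word :: "'a::ring_1 \<Rightarrow> 'a \<Rightarrow> 'a \<Rightarrow> 'a \<Rightarrow> gen list \<Rightarrow> 'a" where
  "eval_word L Lh M Mh w = foldr (\<lambda>g acc. eval_gen L Lh M Mh g * acc) w 1"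

definition eval_poly :: "'a::ring_1 \<Rightarrow> 'a \<Rightarrow> 'a \<Rightarrow> 'a \<Rightarrow> 'a ncpoly \<Rightarrow> 'a" where
  "eval_poly L Lh M Mh p = (\<Sum>(c, w)\<leftarrow>p. c * eval_word L Lh M Mh w)"

definition pmul :: "'a::ring_1 ncpoly \<Rightarrow> 'a ncpoly \<Rightarrow> 'a ncpoly" where
  "pmul p q = [(c * d, v @ w). (c, v) \<leftarrow> p, (d, w) \<leftarrow> q]"

definition Y_gen :: "('a::ring_1 \<Rightarrow> 'a) \<Rightarrow> 'a \<Rightarrow> 'a \<Rightarrow> 'a \<Rightarrow> 'a \<Rightarrow> 'a \<Rightarrow> gen \<Rightarrow> 'a" where
  "Y_gen pp L Lh M Mh A g =
     (case g of
        GL \<Rightarrow> comm (- minus_part pp A) L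
      | GM \<Rightarrow> comm (- minus_part pp A) M
      | GLh \<Rightarrow> comm (pp A) Lh
      | GMh \<Rightarrow> comm (pp A) Mh)"

definition Y_word :: "('a::ring_1 \<Rightarrow> 'a) \<Rightarrow> 'a \<Rightarrow> 'a \<Rightarrow> 'a \<Rightarrow> 'a \<Rightarrow> 'a \<Rightarrow> gen list \<Rightarrow> 'a" where
  "Y_word pp L Lh M Mh A w =
     (\<Sum>i<length w. eval_word L Lh M Mh (take i w) * Y_gen pp L Lh M Mh A (w ! i)
                     * eval_word L Lh M Mh (drop (Suc i) w))"

definition Y_poly :: "('a::ring_1 \<Rightarrow> 'a) \<Rightarrow> 'a \<Rightarrow> 'a \<Rightarrow> 'a \<Rightarrow> 'a \<Rightarrow> 'a \<Rightarrow> 'a ncpoly \<Rightarrow> 'a" where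
  "Y_poly pp L Lh M Mh A p = (\<Sum>(c, w)\<leftarrow>p. c * Y_word pp L Lh M Mh A w)"

definition bkp_bracket :: "('a::ring_1 \<Rightarrow> 'a) \<Rightarrow> 'a \<Rightarrow> 'a \<Rightarrow> 'a \<Rightarrow> 'a \<Rightarrow> 'a ncpoly \<Rightarrow> 'a ncpoly \<Rightarrow> 'a" where
  "bkp_bracket pp L Lh M Mh p q =
     (let A = eval_poly L Lh M Mh p; B = eval_poly L Lh M Mh q in
      - Y_poly pp L Lh M Mh A q + Y_poly pp L Lh M Mh B p
      - comm (minus_part pp A) (minus_part pp B) + comm (pp A) (pp B))"

definition poly_in :: "gen set \<Rightarrow> 'a::ring_1 ncpoly \<Rightarrow> bool" where
  "poly_in S p \<longleftrightarrow> (\<forall>(c, w)\<in>set p. set w \<subseteq> S \<and> (\<forall>x::'a. c * x = x * c))"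

end

theory Submission
  imports Defs
begin

text \<open>Both Y_A and the evaluation respect products of formal polynomials (Y_A as a
  derivation), and on polynomials in L, M alone Y_A is the inner derivation by -A_-,
  while on polynomials in hat L, hat M it is the inner derivation by A_+.  Each
  bracket thus becomes an expression in F, G, hat F, hat G, A_+ and B_+; writing
  A_- = A - A_+ all terms containing A_+ or B_+ cancel, leaving the stated
  commutator identities.\<close>

lemma eval_word_Nil [simp]: "eval_word L Lh M Mh [] = 1"
  by (simp add: eval_word_def)

lemma eval_word_Cons [simp]:
  "eval_word L Lh M Mh (g # w) = eval_gen L Lh M Mh g * eval_word L Lh M Mh w"
  by (simp add: eval_word_def)

lemma eval_word_append:
  "eval_word L Lh M Mh (v @ w) = eval_word L Lh M Mh v * eval_word L Lh M Mh w"
  by (induction v) (simp_all add: mult.assoc)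

lemma Y_word_Nil [simp]: "Y_word pp L Lh M Mh A [] = 0"
  by (simp add: Y_word_def)

lemma Y_word_Cons:
  "Y_word pp L Lh M Mh A (g # w) =
     Y_gen pp L Lh M Mh A g * eval_word L Lh M Mh w + eval_gen L Lh M Mh g * Y_word pp L Lh M Mh A w"
  unfolding Y_word_def
  by (simp add: sum.lessThan_Suc_shift sum_distrib_left mult.assoc del: sum.lessThan_Suc)

lemma Y_word_append:
  "Y_word pp L Lh M Mh A (v @ w) =
     Y_word pp L Lh M Mh A v * eval_word L Lh M Mh w + eval_word L Lh M Mh v * Y_word pp L Lh M Mh A w"
  by (induction v) (simp_all add: Y_word_Cons eval_word_append algebra_simps)

lemma Y_word_eq_comm:
  assumes "\<And>g. g \<in> set w \<Longrightarrow> Y_gen pp L Lh M Mh A g = comm X (eval_gen L Lh M Mh g)"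
  shows "Y_word pp L Lh M Mh A w = comm X (eval_word L Lh M Mh w)"
  using assms
proof (induction w)
  case Nil
  then show ?case by (simp add: comm_def)
next
  case (Cons g w)
  then have "Y_gen pp L Lh M Mh A g = comm X (eval_gen L Lh M Mh g)"
    and "Y_word pp L Lh M Mh A w = comm X (eval_word L Lh M Mh w)"
    by simp_all
  then show ?case
    by (simp only: Y_word_Cons eval_word_Cons) (simp add: comm_def algebra_simps)
qed

lemma Y_poly_eq_comm:
  assumes "poly_in S p"
    and "\<And>g. g \<in> S \<Longrightarrow> Y_gen pp L Lh M Mh A g = comm X (eval_gen L Lh M Mh g)"
  shows "Y_poly pp L Lh M Mh A p = comm X (eval_poly L Lh M Mh p)"
  using assms(1)
proof (induction p)
  case Nil
  then show ?case by (simp add: comm_def Y_poly_def eval_poly_def)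
next
  case (Cons a p)
  obtain c w where a: "a = (c, w)" by force
  from Cons.prems a have w: "set w \<subseteq> S" and cX: "c * X = X * c"
    by (auto simp: poly_in_def)
  from Cons.prems have "poly_in S p" by (auto simp: poly_in_def)
  with Cons.IH have IH: "Y_poly pp L Lh M Mh A p = comm X (eval_poly L Lh M Mh p)" .
  have Yw: "Y_word pp L Lh M Mh A w = comm X (eval_word L Lh M Mh w)"
    using w assms(2) by (intro Y_word_eq_comm) auto
  have cXw: "c * (X * eval_word L Lh M Mh w) = X * (c * eval_word L Lh M Mh w)"
    by (metis cX mult.assoc)
  have "Y_poly pp L Lh M Mh A (a # p) = c * Y_word pp L Lh M Mh A w + Y_poly pp L Lh M Mh A p"
    by (simp add: a Y_poly_def)
  also have "\<dots> = comm X (eval_poly L Lh M Mh (a # p))"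
    using cXw unfolding Yw IH by (simp add: a eval_poly_def comm_def algebra_simps)
  finally show ?case .
qed

lemma Y_poly_LM:
  "poly_in {GL, GM} p \<Longrightarrow> Y_poly pp L Lh M Mh A p = comm (- minus_part pp A) (eval_poly L Lh M Mh p)"
  by (erule Y_poly_eq_comm) (auto simp: Y_gen_def)

lemma Y_poly_hat:
  "poly_in {GLh, GMh} p \<Longrightarrow> Y_poly pp L Lh M Mh A p = comm (pp A) (eval_poly L Lh M Mh p)"
  by (erule Y_poly_eq_comm) (auto simp: Y_gen_def)

lemma poly_in_UNIV: "poly_in S p \<Longrightarrow> poly_in UNIV p"
  unfolding poly_in_def by fast

lemma pmul_Nil [simp]: "pmul [] q = []"
  by (simp add: pmul_def)

lemma pmul_Cons: "pmul ((c, v) # p) q = map (\<lambda>(d, w). (c * d, v @ w)) q @ pmul p q"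
  by (simp add: pmul_def case_prod_beta)

lemma eval_poly_append:
  "eval_poly L Lh M Mh (p @ q) = eval_poly L Lh M Mh p + eval_poly L Lh M Mh q"
  by (simp add: eval_poly_def)

lemma Y_poly_append:
  "Y_poly pp L Lh M Mh A (p @ q) = Y_poly pp L Lh M Mh A p + Y_poly pp L Lh M Mh A q"
  by (simp add: Y_poly_def)

lemma eval_poly_map_prefix:
  assumes "poly_in UNIV q"
  shows "eval_poly L Lh M Mh (map (\<lambda>(d, w). (c * d, v @ w)) q)
           = c * eval_word L Lh M Mh v * eval_poly L Lh M Mh q"
  using assms
proof (induction q)
  case Nil
  then show ?case by (simp add: eval_poly_def)
next
  case (Cons b q)
  obtain d w where b: "b = (d, w)" by force
  from Cons.prems b have d: "\<And>x. d * x = x * d" and q: "poly_in UNIV q"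
    by (auto simp: poly_in_def)
  have "eval_word L Lh M Mh v * (d * X) = d * (eval_word L Lh M Mh v * X)" for X
    by (metis d mult.assoc)
  then show ?case using Cons.IH[OF q]
    by (simp add: b eval_poly_def eval_word_append algebra_simps)
qed

lemma Y_poly_map_prefix:
  assumes "poly_in UNIV q"
  shows "Y_poly pp L Lh M Mh A (map (\<lambda>(d, w). (c * d, v @ w)) q)
           = c * (Y_word pp L Lh M Mh A v * eval_poly L Lh M Mh q
                  + eval_word L Lh M Mh v * Y_poly pp L Lh M Mh A q)"
  using assms
proof (induction q)
  case Nil
  then show ?case by (simp add: eval_poly_def Y_poly_def)
next
  case (Cons b q)
  obtain d w where b: "b = (d, w)" by force
  from Cons.prems b have d: "\<And>x. d * x = x * d" and q: "poly_in UNIV q"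
    by (auto simp: poly_in_def)
  have "Y_word pp L Lh M Mh A v * d = d * Y_word pp L Lh M Mh A v"
    and "eval_word L Lh M Mh v * d = d * eval_word L Lh M Mh v"
    by (simp_all add: d)
  with Cons.IH[OF q] show ?case
    by (simp add: b eval_poly_def Y_poly_def Y_word_append algebra_simps)
       (simp add: mult.assoc[symmetric])
qed

lemma eval_poly_pmul:
  "poly_in UNIV q \<Longrightarrow>
     eval_poly L Lh M Mh (pmul p q) = eval_poly L Lh M Mh p * eval_poly L Lh M Mh q"
proof (induction p)
  case Nil
  then show ?case by (simp add: eval_poly_def)
next
  case (Cons a p)
  then show ?case
    by (cases a) (simp add: pmul_Cons eval_poly_append eval_poly_map_prefix,
                  simp add: eval_poly_def algebra_simps)
qed

lemma Y_poly_pmul: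
  "poly_in UNIV q \<Longrightarrow>
     Y_poly pp L Lh M Mh A (pmul p q)
       = Y_poly pp L Lh M Mh A p * eval_poly L Lh M Mh q + eval_poly L Lh M Mh p * Y_poly pp L Lh M Mh A q"
proof (induction p)
  case Nil
  then show ?case by (simp add: eval_poly_def Y_poly_def)
next
  case (Cons a p)
  then show ?case
    by (cases a) (simp add: pmul_Cons Y_poly_append Y_poly_map_prefix,
                  simp add: eval_poly_def Y_poly_def algebra_simps)
qed

theorem lemma3p3:
  fixes pp :: "'a::ring_1 \<Rightarrow> 'a" and L Lh M Mh :: 'a
    and f g fh gh :: "'a ncpoly"
  assumes "poly_in {GL, GM} f" and "poly_in {GL, GM} g"
    and "poly_in {GLh, GMh} fh" and "poly_in {GLh, GMh} gh"
  defines "F \<equiv> eval_poly L Lh M Mh f" and "G \<equiv> eval_poly L Lh M Mh g"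
    and "Fh \<equiv> eval_poly L Lh M Mh fh" and "Gh \<equiv> eval_poly L Lh M Mh gh"
  shows "bkp_bracket pp L Lh M Mh (pmul f fh) (pmul g gh)
           = comm F G * Fh * Gh - F * G * comm Fh Gh
         \<and> bkp_bracket pp L Lh M Mh (pmul fh f) (pmul gh g)
           = Fh * Gh * comm F G - comm Fh Gh * F * G
         \<and> bkp_bracket pp L Lh M Mh (pmul f fh) (pmul gh g)
           = comm F Gh * comm G Fh - F * comm Fh Gh * G + Gh * comm F G * Fh"
proof -
  note product_rules = eval_poly_pmul Y_poly_pmul poly_in_UNIV[OF assms(1)] poly_in_UNIV[OF assms(2)]
    poly_in_UNIV[OF assms(3)] poly_in_UNIV[OF assms(4)]
  note inner_derivations = Y_poly_LM[OF assms(1)] Y_poly_LM[OF assms(2)]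
    Y_poly_hat[OF assms(3)] Y_poly_hat[OF assms(4)]
  show ?thesis
    unfolding bkp_bracket_def Let_def
    by (simp add: product_rules inner_derivations F_def[symmetric] G_def[symmetric]
        Fh_def[symmetric] Gh_def[symmetric] comm_def minus_part_def algebra_simps)
qed

end
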